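(* Let $n\ge4$, $x_1,\dots,x_{n-1}>0$, $\gamma,\delta>0$ with $\gamma\ne1\ne\delta$, $x_0=1$, and let $\mathbf{P}$ be the $n\times n$ matrix with entries $p_{ij}=x_{j-1}/x_{i-1}$ except $p_{12}=\delta x_1$, $p_{21}=1/(\delta x_1)$, $p_{13}=\gamma x_2$, $p_{31}=1/(\gamma x_2)$. Let $\mathbf{w}^{EM}$ be the principal right eigenvector of $\mathbf{P}$. Then for $i=4,\dots,n$: $\delta>1$ iff $w_2^{EM}/w_i^{EM}<x_{i-1}/x_1$, and $\delta<1$ iff $w_2^{EM}/w_i^{EM}>x_{i-1}/x_1$.
   Context: The principal right eigenvector is the positive (Perron) eigenvector belonging to the largest eigenvalue. *)

theory Defs
  imports "Jordan_Normal_Form.Char_Poly"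
begin

text \<open>Matrices are 0-indexed: entry (i,j) here is the paper's p_{(i+1)(j+1)}.
  The paper's x_k is x k, with x 0 = 1.\<close>

definition pert_matrix :: "nat \<Rightarrow> (nat \<Rightarrow> real) \<Rightarrow> real \<Rightarrow> real \<Rightarrow> real mat" where
  "pert_matrix n x \<gamma> \<delta> = mat n n (\<lambda>(i,j).
      if (i,j) = (0,1) then \<delta> * x 1
      else if (i,j) = (1,0) then 1 / (\<delta> * x 1)
      else if (i,j) = (0,2) then \<gamma> * x 2
      else if (i,j) = (2,0) then 1 / (\<gamma> * x 2)
      else x j / x i)"

definition principal_right_eigenvector :: "real mat \<Rightarrow> real vec \<Rightarrow> bool" where
  "principal_right_eigenvector A w \<longleftrightarrow>
     (\<forall>i<dim_vec w. w $ i > 0) \<and>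
     (\<exists>lam. eigenvector A w lam \<and> (\<forall>mu. eigenvalue A mu \<longrightarrow> mu \<le> lam))"

end

theory Submission
  imports Defs
begin

text \<open>For any positive eigenvector \<open>w\<close> with eigenvalue \<open>\<lambda>\<close>, let \<open>T = \<Sum>\<^sub>j x\<^sub>j w\<^sub>j\<close>.
  Every row \<open>i \<ge> 4\<close> of \<open>P\<close> is the consistent row \<open>x\<^sub>j / x\<^sub>i\<close>, so \<open>\<lambda> w\<^sub>i x\<^sub>i = T\<close>; row 2
  differs from a consistent row only in its first entry, which gives
  \<open>\<lambda> w\<^sub>2 x\<^sub>1 = T + w\<^sub>1 (1/\<delta> - 1)\<close>. Hence \<open>\<lambda> (w\<^sub>2 x\<^sub>1 - w\<^sub>i x\<^sub>i) = w\<^sub>1 (1/\<delta> - 1)\<close>, and since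
  \<open>\<lambda> > 0\<close> the sign of \<open>w\<^sub>2 x\<^sub>1 - w\<^sub>i x\<^sub>i\<close> is the sign of \<open>1 - \<delta>\<close>. Neither \<open>\<gamma>\<close> nor the
  maximality of \<open>\<lambda>\<close> plays any role.\<close>

lemma eigenvector_row_sum:
  fixes A :: "'a::comm_ring_1 mat"
  assumes "eigenvector A w lam" and "A \<in> carrier_mat n n" and "k < n"
  shows "(\<Sum>j<n. A $$ (k, j) * w $ j) = lam * w $ k"
proof -
  have w: "w \<in> carrier_vec n" and eq: "A *\<^sub>v w = lam \<cdot>\<^sub>v w"
    using assms(1,2) unfolding eigenvector_def by auto
  have "(A *\<^sub>v w) $ k = (\<Sum>j<n. A $$ (k, j) * w $ j)"
    using assms(2,3) w by (simp add: scalar_prod_def row_def lessThan_atLeast0)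
  then show ?thesis using eq assms(3) w by simp
qed

lemma pert_matrix_carrier: "pert_matrix n x \<gamma> \<delta> \<in> carrier_mat n n"
  by (simp add: pert_matrix_def)

lemma pert_matrix_row_consistent:
  assumes "3 \<le> i" and "i < n"
  shows "(\<Sum>j<n. pert_matrix n x \<gamma> \<delta> $$ (i, j) * w $ j) = (\<Sum>j<n. x j * w $ j) / x i"
proof -
  have "(\<Sum>j<n. pert_matrix n x \<gamma> \<delta> $$ (i, j) * w $ j) = (\<Sum>j<n. x j * w $ j / x i)"
    by (rule sum.cong) (use assms in \<open>auto simp: pert_matrix_def\<close>)
  then show ?thesis by (simp add: sum_divide_distrib)
qed

lemma pert_matrix_row_one:
  assumes "1 < n" and "x 0 = 1" and "x 1 \<noteq> 0" and "\<delta> \<noteq> 0"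
  shows "(\<Sum>j<n. pert_matrix n x \<gamma> \<delta> $$ (1, j) * w $ j)
           = ((\<Sum>j<n. x j * w $ j) + w $ 0 * (1 / \<delta> - 1)) / x 1"
proof -
  have "(\<Sum>j<n. pert_matrix n x \<gamma> \<delta> $$ (1, j) * w $ j)
          = (\<Sum>j<n. x j * w $ j / x 1 + (if j = 0 then w $ 0 * (1 / \<delta> - 1) / x 1 else 0))"
    by (rule sum.cong) (use assms in \<open>auto simp: pert_matrix_def field_simps\<close>)
  also have "\<dots> = (\<Sum>j<n. x j * w $ j) / x 1 + w $ 0 * (1 / \<delta> - 1) / x 1"
    using assms(1) by (simp add: sum.distrib sum_divide_distrib)
  finally show ?thesis by (simp add: add_divide_distrib)
qed

lemma pert_matrix_eigenvector_gap:
  assumes "eigenvector (pert_matrix n x \<gamma> \<delta>) w lam"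
    and "3 \<le> i" and "i < n" and "x 0 = 1" and "x 1 \<noteq> 0" and "x i \<noteq> 0" and "\<delta> \<noteq> 0"
  shows "lam * w $ i * x i = (\<Sum>j<n. x j * w $ j)"
    and "lam * (w $ 1 * x 1 - w $ i * x i) = w $ 0 * (1 / \<delta> - 1)"
proof -
  note row = eigenvector_row_sum[OF assms(1) pert_matrix_carrier]
  show gap_i: "lam * w $ i * x i = (\<Sum>j<n. x j * w $ j)"
    using row[of i] pert_matrix_row_consistent[OF assms(2,3)] assms(3,6)
    by (simp add: field_simps)
  have "lam * w $ 1 * x 1 = (\<Sum>j<n. x j * w $ j) + w $ 0 * (1 / \<delta> - 1)"
    using row[of 1] pert_matrix_row_one[of n x \<delta> \<gamma> w] assms(2-5,7) by (simp add: field_simps)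
  with gap_i show "lam * (w $ 1 * x 1 - w $ i * x i) = w $ 0 * (1 / \<delta> - 1)"
    by (simp add: algebra_simps)
qed

lemma sign_of_gap:
  fixes lam c a b \<delta> :: real
  assumes "lam > 0" and "c > 0" and "\<delta> > 0" and "lam * (a - b) = c * (1 / \<delta> - 1)"
  shows "(\<delta> > 1 \<longleftrightarrow> a < b) \<and> (\<delta> < 1 \<longleftrightarrow> a > b)"
proof -
  have "sgn (a - b) = sgn (1 / \<delta> - 1)"
    using arg_cong[OF assms(4), of sgn] assms(1,2) by (simp add: sgn_mult)
  moreover have "sgn (1 / \<delta> - 1) = sgn (1 - \<delta>)"
    using assms(3) by (auto simp: sgn_if field_simps)
  ultimately show ?thesis by (auto simp: sgn_if split: if_splits)
qed

theorem mainTheorem10: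
  fixes n :: nat and x :: "nat \<Rightarrow> real" and \<gamma> \<delta> :: real and w :: "real vec"
  assumes "n \<ge> 4"
    and "\<forall>k\<in>{1..n-1}. x k > 0"
    and "x 0 = 1"
    and "\<gamma> > 0" and "\<delta> > 0" and "\<gamma> \<noteq> 1" and "\<delta> \<noteq> 1"
    and "principal_right_eigenvector (pert_matrix n x \<gamma> \<delta>) w"
  shows "\<forall>i\<in>{3..<n}.
           (\<delta> > 1 \<longleftrightarrow> w $ 1 / w $ i < x i / x 1) \<and>
           (\<delta> < 1 \<longleftrightarrow> w $ 1 / w $ i > x i / x 1)"
proof
  fix i assume i: "i \<in> {3..<n}"
  obtain lam where wpos: "\<forall>j<dim_vec w. w $ j > 0"
    and ev: "eigenvector (pert_matrix n x \<gamma> \<delta>) w lam"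
    using assms(8) unfolding principal_right_eigenvector_def by blast
  have "dim_vec w = n"
    using ev pert_matrix_carrier unfolding eigenvector_def by fastforce
  then have w: "j < n \<Longrightarrow> w $ j > 0" for j using wpos by simp
  have x: "x j > 0" if "j < n" for j using that assms(2,3) by (cases "j = 0") auto
  have i_bounds: "3 \<le> i" "i < n" using i by auto
  have "x 1 \<noteq> 0" "x i \<noteq> 0" using x[of 1] x[of i] i_bounds assms(1) by auto
  from assms(5) have "\<delta> \<noteq> 0" by simp
  note gap = pert_matrix_eigenvector_gap[OF ev i_bounds assms(3) \<open>x 1 \<noteq> 0\<close> \<open>x i \<noteq> 0\<close> this]
  have "(\<Sum>j<n. x j * w $ j) > 0"
    using assms(1) x w by (intro sum_pos) (auto simp: lessThan_empty_iff)
  then have lam_prod: "0 < lam * (w $ i * x i)" using gap(1) by (simp add: mult.assoc)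
  have "0 < w $ i * x i" using w[of i] x[of i] i_bounds(2) by simp
  with lam_prod have "lam > 0" by (rule zero_less_mult_pos2)
  moreover have "w $ 0 > 0" using w i_bounds by simp
  ultimately have "(\<delta> > 1 \<longleftrightarrow> w $ 1 * x 1 < w $ i * x i) \<and> (\<delta> < 1 \<longleftrightarrow> w $ 1 * x 1 > w $ i * x i)"
    using assms(5) gap(2) by (rule sign_of_gap)
  then show "(\<delta> > 1 \<longleftrightarrow> w $ 1 / w $ i < x i / x 1) \<and> (\<delta> < 1 \<longleftrightarrow> w $ 1 / w $ i > x i / x 1)"
    using i_bounds x[of 1] x[of i] w[of i] assms(1) by (simp add: divide_simps mult.commute)
qed

end
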